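(* Let $m\ge1$ and, for $\alpha=(\alpha_1,\ldots,\alpha_m)\in\mathbb{C}^m$, let $V(\alpha)$ be the Vandermonde matrix whose $(j,k)$ entry is $\alpha_j^{k-1}$ ($1\le j,k\le m$). For $\alpha$ with pairwise distinct coordinates, define the column vector of functions $$\big(f_1(x;\alpha),\ldots,f_m(x;\alpha)\big)^T:=V(\alpha)^{-1}\big(e^{\alpha_1x},\ldots,e^{\alpha_mx}\big)^T.$$ Then each $f_i$ extends to an entire function of $(x,\alpha)\in\mathbb{C}\times\mathbb{C}^m$, and for every fixed $\alpha\in\mathbb{C}^m$ the functions $f_1(\cdot;\alpha),\ldots,f_m(\cdot;\alpha)$ are linearly independent analytic solutions of $\big(\prod_{j=1}^m(\frac{d}{dx}-\alpha_j)\big)f=0$; i.e. they form a graceful basis of its solution space.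
   Context: A graceful basis for the equation $\big(\prod_{j=1}^m(\frac{d}{dx}-\alpha_j)\big)f=0$ is an $m$-tuple of analytic solutions $f_j(x;\alpha)$, $j=1,\dots,m$, such that each $f_j$ is an entire function of $(x,\alpha)\in\mathbb{C}\times\mathbb{C}^m$ and, for every fixed $\alpha\in\mathbb{C}^m$, the univariate functions $f_1(\cdot;\alpha),\dots,f_m(\cdot;\alpha)$ are linearly independent solutions of the equation. *)

theory Defs
  imports "HOL-Analysis.Analysis"
begin

text \<open>Indices 1..m are modelled by a finite linearly ordered type 'm (m = CARD('m)).
  The position (0-based) of an index k is the number of indices strictly below it;
  the (j,k) entry of the Vandermonde matrix is alpha_j to the power pos k.\<close>

definition pos :: "'m::{finite,linorder} \<Rightarrow> nat" where
  "pos k = card {i. i < k}"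

definition vandermonde :: "complex ^ 'm::{finite,linorder} \<Rightarrow> complex ^ 'm::{finite,linorder} ^ 'm::{finite,linorder}" where
  "vandermonde \<alpha> = (\<chi> j k. (\<alpha> $ j) ^ pos k)"

text \<open>Entire (holomorphic on all of C x C^m) function of several complex variables:
  Frechet differentiable everywhere with complex-linear derivative.\<close>

definition entire_cm :: "((complex \<times> (complex ^ 'm::finite)) \<Rightarrow> complex) \<Rightarrow> bool" where
  "entire_cm F \<longleftrightarrow> (\<forall>z. \<exists>D. (F has_derivative D) (at z) \<and>
       (\<forall>c u v. D (c * u, c *s v) = c * D (u, v)))"

definition dop :: "complex \<Rightarrow> (complex \<Rightarrow> complex) \<Rightarrow> (complex \<Rightarrow> complex)" where
  "dop a g = (\<lambda>x. deriv g x - a * g x)"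

definition ode_op :: "complex ^ 'm::{finite,linorder} \<Rightarrow> (complex \<Rightarrow> complex) \<Rightarrow> (complex \<Rightarrow> complex)" where
  "ode_op \<alpha> g = fold (\<lambda>j h. dop (\<alpha> $ j) h) (sorted_list_of_set (UNIV :: 'm set)) g"

end

theory Submission
  imports Defs "HOL-Computational_Algebra.Polynomial"
begin

(* Let \<omega>(t) = (t - \<alpha>\<^sub>1)...(t - \<alpha>\<^sub>m) and let P\<^sub>n be the remainder of t^n modulo \<omega>, and put
   f\<^sub>k(x;\<alpha>) = \<Sum>\<^sub>n [t^k] P\<^sub>n x^n/n!, the coefficients of e^(xt) mod \<omega>. Since P\<^sub>n(\<alpha>\<^sub>j) = \<alpha>\<^sub>j^n, the
   Vandermonde matrix maps (f\<^sub>k) to (e^(\<alpha>\<^sub>j x)), so f = V(\<alpha>)^-1 e when the \<alpha>\<^sub>j are distinct.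
   Applying d/dx - \<alpha>\<^sub>i to such a series multiplies t^n by t - \<alpha>\<^sub>i before reducing, so the
   whole operator produces the remainders of t^n \<omega>, which vanish. As P\<^sub>k = t^k for k < m, the
   Taylor coefficients of \<Sum> c\<^sub>k f\<^sub>k include the c\<^sub>k themselves, whence independence.
   Entireness in (x, \<alpha>) comes from expanding P\<^sub>n in the Newton basis (t - \<alpha>\<^sub>1)...(t - \<alpha>\<^sub>l):
   the coordinates are polynomials in \<alpha> growing geometrically in n, as do their derivatives,
   so the series may be differentiated termwise. *)

section \<open>Exponential generating series\<close>

definition geom_bounded :: "(nat \<Rightarrow> 'a::real_normed_vector) \<Rightarrow> bool" where
  "geom_bounded a \<longleftrightarrow> (\<exists>C B. B \<ge> 0 \<and> (\<forall>n. norm (a n) \<le> C * B ^ n))"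

definition egf :: "(nat \<Rightarrow> 'a::real_normed_field) \<Rightarrow> 'a \<Rightarrow> 'a" where
  "egf a x = (\<Sum>n. a n / fact n * x ^ n)"

lemma geom_bounded_powerI: "(\<And>n. norm (a n) \<le> B ^ n) \<Longrightarrow> geom_bounded a"
  unfolding geom_bounded_def by (metis mult_1 norm_ge_zero order_trans power_one_right)

lemma geom_bounded_Suc: "geom_bounded a \<Longrightarrow> geom_bounded (\<lambda>n. a (Suc n))"
  unfolding geom_bounded_def by (metis mult.assoc mult.commute power_Suc)

lemma geom_bounded_shift: "geom_bounded a \<Longrightarrow> geom_bounded (\<lambda>n. a (n + k))"
  by (induction k) (auto dest: geom_bounded_Suc)

lemma geom_bounded_cmult:
  fixes a :: "nat \<Rightarrow> 'a::real_normed_algebra"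
  assumes "geom_bounded a" shows "geom_bounded (\<lambda>n. c * a n)"
proof -
  obtain C B where "B \<ge> 0" "\<And>n. norm (a n) \<le> C * B ^ n"
    using assms unfolding geom_bounded_def by blast
  then have "norm (c * a n) \<le> (norm c * C) * B ^ n" for n
    by (metis mult.assoc mult_left_mono norm_ge_zero norm_mult_ineq order_trans)
  with \<open>B \<ge> 0\<close> show ?thesis unfolding geom_bounded_def by blast
qed

lemma geom_bounded_add:
  assumes "geom_bounded a" "geom_bounded b" shows "geom_bounded (\<lambda>n. a n + b n)"
proof -
  obtain C B where B: "B \<ge> 0" and a: "\<And>n. norm (a n) \<le> C * B ^ n"
    using assms(1) unfolding geom_bounded_def by blast
  obtain C' B' where B': "B' \<ge> 0" and b: "\<And>n. norm (b n) \<le> C' * B' ^ n"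
    using assms(2) unfolding geom_bounded_def by blast
  have "C \<ge> 0" "C' \<ge> 0"
    using order_trans[OF norm_ge_zero a[of 0]] order_trans[OF norm_ge_zero b[of 0]] by simp_all
  have "norm (a n + b n) \<le> (C + C') * max B B' ^ n" for n
  proof -
    have "norm (a n + b n) \<le> C * B ^ n + C' * B' ^ n"
      using norm_triangle_le[OF add_mono[OF a b]] .
    also have "\<dots> \<le> C * max B B' ^ n + C' * max B B' ^ n"
      using B B' \<open>C \<ge> 0\<close> \<open>C' \<ge> 0\<close> by (intro add_mono mult_left_mono power_mono) auto
    finally show ?thesis by (simp add: distrib_right)
  qed
  then show ?thesis unfolding geom_bounded_def using B by (metis max.coboundedI1)
qed

lemma geom_bounded_sum:
  fixes s :: "'i \<Rightarrow> nat \<Rightarrow> 'a::real_normed_algebra"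
  shows "(\<And>l. l \<in> L \<Longrightarrow> geom_bounded (s l)) \<Longrightarrow> geom_bounded (\<lambda>n. \<Sum>l\<in>L. c l * s l n)"
proof (induction L rule: infinite_finite_induct)
  case (insert l L)
  then show ?case by (simp add: geom_bounded_add geom_bounded_cmult)
qed (simp_all add: geom_bounded_def exI[of _ 0])

lemma summable_egf:
  fixes a :: "nat \<Rightarrow> 'a::{real_normed_field,banach}"
  assumes "geom_bounded a" shows "summable (\<lambda>n. a n / fact n * x ^ n)"
proof -
  obtain C B where "B \<ge> 0" and a: "\<And>n. norm (a n) \<le> C * B ^ n"
    using assms unfolding geom_bounded_def by blast
  have "summable (\<lambda>n. C * ((B * norm x) ^ n / fact n))"
    using summable_exp[of "B * norm x"] by (intro summable_mult) (simp add: field_simps)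
  moreover have "norm (a n / fact n * x ^ n) \<le> C * ((B * norm x) ^ n / fact n)" for n
  proof -
    have "norm (a n / fact n * x ^ n) = norm (a n) * norm x ^ n / fact n"
      by (simp add: norm_mult norm_divide norm_power)
    also have "\<dots> \<le> C * B ^ n * norm x ^ n / fact n"
      using a by (intro divide_right_mono mult_right_mono) auto
    finally show ?thesis by (simp add: power_mult_distrib)
  qed
  ultimately show ?thesis by (rule summable_comparison_test'[where N = 0])
qed

lemma egf_diff:
  fixes a b :: "nat \<Rightarrow> 'a::{real_normed_field,banach}"
  assumes "geom_bounded a" "geom_bounded b"
  shows "egf (\<lambda>n. a n - b n) x = egf a x - egf b x"
  unfolding egf_def using suminf_diff[OF summable_egf[OF assms(1)] summable_egf[OF assms(2)]]
  by (simp add: diff_divide_distrib algebra_simps)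

lemma egf_cmult:
  fixes a :: "nat \<Rightarrow> 'a::{real_normed_field,banach}"
  assumes "geom_bounded a"
  shows "egf (\<lambda>n. c * a n) x = c * egf a x"
  unfolding egf_def using suminf_mult[OF summable_egf[OF assms], of c]
  by (simp add: mult.assoc)

lemma egf_sum:
  fixes s :: "'i \<Rightarrow> nat \<Rightarrow> 'a::{real_normed_field,banach}"
  assumes "finite L" "\<And>l. l \<in> L \<Longrightarrow> geom_bounded (s l)"
  shows "egf (\<lambda>n. \<Sum>l\<in>L. c l * s l n) x = (\<Sum>l\<in>L. c l * egf (s l) x)"
proof -
  have "egf (\<lambda>n. \<Sum>l\<in>L. c l * s l n) x = (\<Sum>n. \<Sum>l\<in>L. c l * (s l n / fact n * x ^ n))"
    unfolding egf_def by (simp add: sum_divide_distrib sum_distrib_right mult.assoc)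
  also have "\<dots> = (\<Sum>l\<in>L. \<Sum>n. c l * (s l n / fact n * x ^ n))"
    using assms by (intro suminf_sum summable_mult summable_egf) auto
  also have "\<dots> = (\<Sum>l\<in>L. c l * egf (s l) x)"
    unfolding egf_def using assms by (intro sum.cong refl suminf_mult summable_egf) auto
  finally show ?thesis .
qed

lemma egf_at_0: "egf a 0 = a 0"
  unfolding egf_def using powser_zero[of "\<lambda>n. a n / fact n"] by simp

lemma egf_power: "egf (\<lambda>n. b ^ n) x = exp (b * x)"
proof -
  have "(\<lambda>n. b ^ n / fact n * x ^ n) = (\<lambda>n. (b * x) ^ n /\<^sub>R fact n)"
    by (simp add: fun_eq_iff scaleR_conv_of_real power_mult_distrib field_simps)
  then show ?thesis
    unfolding egf_def using exp_converges[of "b * x"] by (simp add: sums_iff)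
qed

lemma has_field_derivative_egf:
  fixes a :: "nat \<Rightarrow> 'a::{real_normed_field,banach}"
  assumes "geom_bounded a"
  shows "(egf a has_field_derivative egf (\<lambda>n. a (Suc n)) x) (at x)"
proof -
  have "diffs (\<lambda>n. a n / fact n) = (\<lambda>n. a (Suc n) / fact n)"
    by (simp add: diffs_def fun_eq_iff field_simps del: of_nat_Suc)
  then show ?thesis
    using termdiffs_strong[OF summable_egf[OF assms, of "of_real (norm x + 1)"], of x]
    unfolding egf_def[abs_def] by simp
qed

lemma deriv_egf: "geom_bounded a \<Longrightarrow> deriv (egf a) = egf (\<lambda>n. a (Suc n))"
  for a :: "nat \<Rightarrow> 'a::{real_normed_field,banach}"
  using has_field_derivative_egf DERIV_imp_deriv by blast

lemma egf_holomorphic: "geom_bounded a \<Longrightarrow> egf a holomorphic_on S"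
  for a :: "nat \<Rightarrow> complex"
  using has_field_derivative_egf field_differentiable_at_within
  unfolding holomorphic_on_def field_differentiable_def by metis

lemma egf_eq_0_imp_coeffs_eq_0:
  fixes a :: "nat \<Rightarrow> 'a::{real_normed_field,banach}"
  assumes "geom_bounded a" "\<And>x. egf a x = 0"
  shows "a n = 0"
proof -
  have "(deriv ^^ k) (egf a) = egf (\<lambda>i. a (i + k))" for k
    by (induction k) (simp_all add: deriv_egf geom_bounded_shift[OF assms(1)])
  moreover have "(deriv ^^ k) (egf a) = (\<lambda>x. 0)" for k
  proof -
    have "egf a = (\<lambda>x. 0)" using assms(2) by blast
    then show ?thesis by (induction k) simp_all
  qed
  ultimately have "egf (\<lambda>i. a (i + n)) 0 = 0" by metis
  then show ?thesis by (simp add: egf_at_0)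
qed

definition shift_diff :: "'a \<Rightarrow> (nat \<Rightarrow> 'a) \<Rightarrow> nat \<Rightarrow> 'a::ring" where
  "shift_diff b s n = s (Suc n) - b * s n"

lemma geom_bounded_shift_diff: "geom_bounded s \<Longrightarrow> geom_bounded (shift_diff b s)"
  for s :: "nat \<Rightarrow> 'a::real_normed_algebra"
  unfolding shift_diff_def diff_conv_add_uminus minus_mult_left
  by (intro geom_bounded_add geom_bounded_cmult geom_bounded_Suc)

lemma dop_egf: "geom_bounded s \<Longrightarrow> dop b (egf s) = egf (shift_diff b s)"
  unfolding dop_def shift_diff_def
  by (simp add: fun_eq_iff deriv_egf egf_diff egf_cmult geom_bounded_Suc geom_bounded_cmult)

lemma fold_dop_egf:
  "geom_bounded s \<Longrightarrow>
     fold (\<lambda>i. dop (b i)) is (egf s) = egf (fold (\<lambda>i. shift_diff (b i)) is s)"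
proof (induction "is" arbitrary: s)
  case (Cons i "is")
  then show ?case by (simp add: dop_egf geom_bounded_shift_diff)
qed simp

section \<open>Newton basis and remainders of powers\<close>

definition newton :: "(nat \<Rightarrow> 'a::comm_ring_1) \<Rightarrow> nat \<Rightarrow> 'a poly" where
  "newton b l = (\<Prod>i<l. [:- b i, 1:])"

lemma newton_0 [simp]: "newton b 0 = 1"
  by (simp add: newton_def)

lemma newton_Suc: "newton b (Suc l) = newton b l * [:- b l, 1:]"
  by (simp add: newton_def)

lemma coeff_newton_Suc:
  "coeff (newton b (Suc l)) i = (if i = 0 then 0 else coeff (newton b l) (i - 1)) - b l * coeff (newton b l) i"
  by (cases i) (simp_all add: newton_Suc)

lemma poly_newton: "poly (newton b l) x = (\<Prod>i<l. x - b i)"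
  by (simp add: newton_def poly_prod)

lemma degree_newton: "degree (newton b l) = l"
  for b :: "nat \<Rightarrow> 'a::idom"
  unfolding newton_def by (subst degree_prod_eq_sum_degree) auto

lemma monom_mult_newton: "[:0, 1:] * newton b l = smult (b l) (newton b l) + newton b (Suc l)"
  by (simp add: newton_Suc algebra_simps flip: smult_add_left)

text \<open>The coordinates of t^n mod (t - b 0)...(t - b (N - 1)) in the Newton basis; explicitly,
  newton_coord b n l is the complete homogeneous symmetric polynomial of degree n - l in
  b 0, ..., b l.\<close>

fun newton_coord :: "(nat \<Rightarrow> 'a::comm_semiring_1) \<Rightarrow> nat \<Rightarrow> nat \<Rightarrow> 'a" where
  "newton_coord b 0 l = (if l = 0 then 1 else 0)"
| "newton_coord b (Suc n) l = b l * newton_coord b n l + (if l = 0 then 0 else newton_coord b n (l - 1))"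

definition power_rem :: "(nat \<Rightarrow> 'a::comm_ring_1) \<Rightarrow> nat \<Rightarrow> nat \<Rightarrow> 'a poly" where
  "power_rem b N n = (\<Sum>l<N. smult (newton_coord b n l) (newton b l))"

lemma power_rem_Suc:
  assumes "N > 0"
  shows "power_rem b N (Suc n) = [:0, 1:] * power_rem b N n - smult (newton_coord b n (N - 1)) (newton b N)"
proof -
  obtain k where N: "N = Suc k" using assms gr0_conv_Suc by blast
  have "[:0, 1:] * power_rem b N n
      = (\<Sum>l<N. smult (newton_coord b n l * b l) (newton b l)) + (\<Sum>l<N. smult (newton_coord b n l) (newton b (Suc l)))"
    unfolding power_rem_def
    by (simp only: sum_distrib_left mult_smult_right monom_mult_newton smult_add_right sum.distrib smult_smult)
  moreover have "(\<Sum>l<N. smult (newton_coord b n l) (newton b (Suc l)))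
      = (\<Sum>l<N. smult (if l = 0 then 0 else newton_coord b n (l - 1)) (newton b l)) + smult (newton_coord b n k) (newton b N)"
    unfolding N by (subst (2) sum.lessThan_Suc_shift) simp
  ultimately show ?thesis
    unfolding power_rem_def N by (simp add: smult_add_left sum.distrib mult.commute)
qed

lemma degree_power_rem_less: "N > 0 \<Longrightarrow> degree (power_rem b N n) < N"
  for b :: "nat \<Rightarrow> 'a::idom"
  unfolding power_rem_def
  by (rule le_less_trans[OF degree_sum_le[where n = "N - 1"]])
    (auto intro: order_trans[OF degree_smult_le] simp: degree_newton)

lemma power_rem_eq_mod: "power_rem b N n = monom 1 n mod newton b N"
  for b :: "nat \<Rightarrow> 'a::field"
proof (cases "N = 0")
  case True
  then show ?thesis by (simp add: power_rem_def)
next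
  case False
  then show ?thesis
  proof (induction n)
    case 0
    have "power_rem b N 0 = 1"
      unfolding power_rem_def using \<open>N \<noteq> 0\<close> by (subst sum.remove[where x = 0]) auto
    with \<open>N \<noteq> 0\<close> show ?case by (simp add: degree_newton mod_poly_less)
  next
    case (Suc n)
    have "monom 1 (Suc n) mod newton b N = ([:0, 1:] * monom 1 n) mod newton b N"
      by (simp add: monom_Suc)
    also have "\<dots> = ([:0, 1:] * (monom 1 n mod newton b N)) mod newton b N"
      by (rule mod_mult_right_eq[symmetric])
    also have "\<dots> = (power_rem b N (Suc n) + smult (newton_coord b n (N - 1)) (newton b N)) mod newton b N"
      using Suc by (simp add: power_rem_Suc)
    also have "\<dots> = power_rem b N (Suc n)"
      using Suc.prems by (simp add: mod_smult_left poly_mod_add_left mod_poly_less degree_newton degree_power_rem_less)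
    finally show ?case by simp
  qed
qed

lemma poly_power_rem: "j < N \<Longrightarrow> poly (power_rem b N n) (b j) = b j ^ n"
  for b :: "nat \<Rightarrow> 'a::field"
proof -
  assume "j < N"
  then have "poly (newton b N) (b j) = 0"
    by (auto simp: poly_newton intro: prod_zero bexI[of _ j])
  then have "poly (monom 1 n) (b j) = poly (monom 1 n mod newton b N) (b j)"
    by (metis (no_types) add_0 div_mult_mod_eq mult_zero_right poly_add poly_mult)
  then show ?thesis by (simp add: power_rem_eq_mod poly_monom)
qed

lemma coeff_power_rem: "coeff (power_rem b N n) i = (\<Sum>l<N. coeff (newton b l) i * newton_coord b n l)"
  by (simp add: power_rem_def coeff_sum mult.commute)

lemma fold_shift_diff_coeff_mod:
  fixes b :: "nat \<Rightarrow> 'a::field"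
  shows "fold (\<lambda>i. shift_diff (b i)) [0..<l] (\<lambda>n. coeff (monom 1 n mod p) k)
       = (\<lambda>n. coeff (monom 1 n * newton b l mod p) k)"
proof (induction l)
  case (Suc l)
  have "monom 1 n * newton b (Suc l) = monom 1 (Suc n) * newton b l - smult (b l) (monom 1 n * newton b l)" for n
    by (simp add: newton_Suc monom_Suc algebra_simps)
  then show ?case
    using Suc by (simp add: shift_diff_def fun_eq_iff poly_mod_diff_left mod_smult_left)
qed simp

lemma norm_newton_coord_le:
  fixes b :: "nat \<Rightarrow> 'a::real_normed_field"
  assumes "\<And>i. norm (b i) \<le> R"
  shows "norm (newton_coord b n l) \<le> (R + 1) ^ n"
proof (induction n arbitrary: l)
  case (Suc n)
  have "norm (newton_coord b (Suc n) l)
      \<le> norm (b l) * norm (newton_coord b n l) + norm (if l = 0 then 0 else newton_coord b n (l - 1))"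
    by (simp add: norm_triangle_le norm_mult del: newton_coord.simps(1))
  also have "\<dots> \<le> R * (R + 1) ^ n + (R + 1) ^ n"
    using Suc order_trans[OF norm_ge_zero assms] by (intro add_mono mult_mono assms) auto
  finally show ?case by (simp add: algebra_simps)
qed simp

lemma geom_bounded_newton_coord:
  "(\<And>i. norm (b i) \<le> R) \<Longrightarrow> geom_bounded (\<lambda>n. newton_coord b n l)"
  for b :: "nat \<Rightarrow> 'a::real_normed_field"
  by (rule geom_bounded_powerI[OF norm_newton_coord_le])

fun newton_coord_deriv :: "(nat \<Rightarrow> 'a::comm_semiring_1) \<Rightarrow> (nat \<Rightarrow> 'a) \<Rightarrow> nat \<Rightarrow> nat \<Rightarrow> 'a" where
  "newton_coord_deriv b db 0 l = 0"
| "newton_coord_deriv b db (Suc n) l = db l * newton_coord b n l + b l * newton_coord_deriv b db n l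
     + (if l = 0 then 0 else newton_coord_deriv b db n (l - 1))"

lemma has_derivative_newton_coord:
  fixes b :: "'p::real_normed_vector \<Rightarrow> nat \<Rightarrow> 'a::real_normed_field"
  assumes "\<And>i. ((\<lambda>p. b p i) has_derivative (\<lambda>h. b' h i)) (at p)"
  shows "((\<lambda>p. newton_coord (b p) n l) has_derivative (\<lambda>h. newton_coord_deriv (b p) (b' h) n l)) (at p)"
proof (induction n arbitrary: l)
  case (Suc n)
  have "((\<lambda>p. b p l * newton_coord (b p) n l) has_derivative
      (\<lambda>h. b p l * newton_coord_deriv (b p) (b' h) n l + b' h l * newton_coord (b p) n l)) (at p)"
    by (rule has_derivative_mult[OF assms Suc])
  moreover have "((\<lambda>p. if l = 0 then 0 else newton_coord (b p) n (l - 1)) has_derivative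
      (\<lambda>h. if l = 0 then 0 else newton_coord_deriv (b p) (b' h) n (l - 1))) (at p)"
    using Suc by (cases "l = 0") simp_all
  ultimately show ?case
    by (simp only: newton_coord.simps newton_coord_deriv.simps) (auto dest: has_derivative_add simp: algebra_simps)
qed simp

lemma newton_coord_deriv_cmult:
  "newton_coord_deriv b (\<lambda>i. c * db i) n l = c * newton_coord_deriv b db n l"
  for c :: "'a::comm_semiring_1"
  by (induction n arbitrary: l) (simp_all add: algebra_simps)

lemma norm_newton_coord_deriv_le:
  fixes b db :: "nat \<Rightarrow> 'a::real_normed_field"
  assumes b: "\<And>i. norm (b i) \<le> R" and db: "\<And>i. norm (db i) \<le> D"
  shows "norm (newton_coord_deriv b db n l) \<le> n * (R + 1) ^ n * D"
proof (induction n arbitrary: l)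
  case (Suc n)
  have R: "R \<ge> 0" and D: "D \<ge> 0" using order_trans[OF norm_ge_zero b] order_trans[OF norm_ge_zero db] by auto
  have "norm (newton_coord_deriv b db (Suc n) l)
      \<le> norm (db l) * norm (newton_coord b n l) + norm (b l) * norm (newton_coord_deriv b db n l)
        + norm (if l = 0 then 0 else newton_coord_deriv b db n (l - 1))"
    by (simp add: norm_triangle_le norm_mult del: newton_coord_deriv.simps(1))
  also have "\<dots> \<le> D * (R + 1) ^ n + R * (n * (R + 1) ^ n * D) + n * (R + 1) ^ n * D"
    using Suc R D by (intro add_mono mult_mono db b norm_newton_coord_le) auto
  also have "\<dots> \<le> Suc n * (R + 1) ^ Suc n * D"
    using R D by (simp add: algebra_simps)
  finally show ?case .
qed simp

section \<open>Entire functions on C x C^m\<close>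

lemma norm_suminf_tail_le:
  fixes f :: "nat \<Rightarrow> 'a::banach"
  assumes "summable M" "\<And>i. norm (f i) \<le> M i * c"
  shows "norm ((\<Sum>i<n. f i) - (\<Sum>i. f i)) \<le> (\<Sum>i. M (i + n)) * c"
proof -
  have norm_f: "summable (\<lambda>i. norm (f i))"
    by (rule summable_comparison_test'[where N = 0, OF summable_mult2[OF assms(1)]]) (use assms(2) in simp)
  have "norm ((\<Sum>i<n. f i) - (\<Sum>i. f i)) = norm (\<Sum>i. f (i + n))"
    using suminf_minus_initial_segment[OF summable_norm_cancel[OF norm_f], of n]
    by (simp add: norm_minus_commute)
  also have "\<dots> \<le> (\<Sum>i. norm (f (i + n)))"
    by (rule summable_norm[OF summable_ignore_initial_segment[OF norm_f]])
  also have "\<dots> \<le> (\<Sum>i. M (i + n) * c)"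
    using assms(2) summable_ignore_initial_segment[OF norm_f]
      summable_mult2[OF summable_ignore_initial_segment[OF assms(1)]]
    by (intro suminf_le) auto
  finally show ?thesis
    by (simp add: suminf_mult2[OF summable_ignore_initial_segment[OF assms(1)]])
qed

lemma has_derivative_series_Mtest:
  fixes f :: "nat \<Rightarrow> 'a::real_normed_vector \<Rightarrow> 'b::banach"
  assumes S: "open S" "convex S" "x0 \<in> S"
    and f': "\<And>n x. x \<in> S \<Longrightarrow> (f n has_derivative f' n x) (at x)"
    and M: "\<And>n x h. x \<in> S \<Longrightarrow> norm (f' n x h) \<le> M n * norm h" "summable M"
    and f: "\<And>x. x \<in> S \<Longrightarrow> summable (\<lambda>n. f n x)"
  shows "((\<lambda>x. \<Sum>n. f n x) has_derivative (\<lambda>h. \<Sum>n. f' n x0 h)) (at x0)"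
proof -
  have tail: "norm ((\<Sum>i<n. f' i x h) - (\<Sum>i. f' i x h)) \<le> (\<Sum>i. M (i + n)) * norm h"
    if "x \<in> S" for x h n
    using M(1)[OF that] by (rule norm_suminf_tail_le[OF M(2)])
  have "\<exists>g. \<forall>x\<in>S. (\<lambda>n. f n x) sums g x \<and> (g has_derivative (\<lambda>h. \<Sum>n. f' n x h)) (at x within S)"
  proof (rule has_derivative_series[OF S(2) _ _ S(3)])
    show "(f n has_derivative f' n x) (at x within S)" if "x \<in> S" for n x
      using f'[OF that] by (rule has_derivative_subset) simp
    show "(\<lambda>n. f n x0) sums (\<Sum>n. f n x0)"
      using f[OF S(3)] by (simp add: summable_sums)
  next
    fix e :: real assume "e > 0"
    then obtain N where "\<forall>n\<ge>N. norm (\<Sum>i. M (i + n)) < e"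
      using suminf_exist_split[OF _ M(2)] by blast
    then have "norm ((\<Sum>i<n. f' i x h) - (\<Sum>i. f' i x h)) \<le> e * norm h" if "n \<ge> N" "x \<in> S" for n x h
      using order_trans[OF tail[OF that(2)] mult_right_mono[OF less_imp_le]] that(1) by fastforce
    then show "\<forall>\<^sub>F n in sequentially. \<forall>x\<in>S. \<forall>h. norm ((\<Sum>i<n. f' i x h) - (\<Sum>i. f' i x h)) \<le> e * norm h"
      unfolding eventually_sequentially by blast
  qed
  then obtain g where g: "\<And>x. x \<in> S \<Longrightarrow> (\<lambda>n. f n x) sums g x"
    and g': "(g has_derivative (\<lambda>h. \<Sum>n. f' n x0 h)) (at x0 within S)"
    using S(3) by blast
  have "g x = (\<Sum>n. f n x)" if "x \<in> S" for x
    using g[OF that] by (simp add: sums_iff)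
  with g' show ?thesis
    unfolding at_within_open[OF S(3,1)] by (rule has_derivative_transform_within_open[OF _ S(1,3)])
qed

definition complex_homogeneous :: "((complex \<times> (complex ^ 'm::finite)) \<Rightarrow> complex) \<Rightarrow> bool" where
  "complex_homogeneous D \<longleftrightarrow> (\<forall>c u v. D (c * u, c *s v) = c * D (u, v))"

lemma entire_cm_iff:
  "entire_cm F \<longleftrightarrow> (\<forall>z. \<exists>D. (F has_derivative D) (at z) \<and> complex_homogeneous D)"
  unfolding entire_cm_def complex_homogeneous_def ..

lemma entire_cm_const: "entire_cm (\<lambda>z. c)"
  unfolding entire_cm_iff complex_homogeneous_def by (auto intro!: exI[of _ "\<lambda>h. 0"])

lemma entire_cm_component: "entire_cm (\<lambda>z. snd z $ j)"
  unfolding entire_cm_iff complex_homogeneous_def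
  by (auto intro!: exI[of _ "\<lambda>h. snd h $ j"] bounded_linear_imp_has_derivative
      bounded_linear_compose[OF bounded_linear_vec_nth bounded_linear_snd, unfolded o_def])

lemma entire_cm_add: "entire_cm f \<Longrightarrow> entire_cm g \<Longrightarrow> entire_cm (\<lambda>z. f z + g z)"
  unfolding entire_cm_iff
proof (intro allI)
  fix z assume "\<forall>z. \<exists>D. (f has_derivative D) (at z) \<and> complex_homogeneous D"
    and "\<forall>z. \<exists>D. (g has_derivative D) (at z) \<and> complex_homogeneous D"
  then obtain Df Dg where "(f has_derivative Df) (at z)" "complex_homogeneous Df"
    and "(g has_derivative Dg) (at z)" "complex_homogeneous Dg"
    by blast
  then show "\<exists>D. ((\<lambda>z. f z + g z) has_derivative D) (at z) \<and> complex_homogeneous D"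
    by (intro exI[of _ "\<lambda>h. Df h + Dg h"] conjI has_derivative_add)
      (auto simp: complex_homogeneous_def algebra_simps)
qed

lemma entire_cm_mult: "entire_cm f \<Longrightarrow> entire_cm g \<Longrightarrow> entire_cm (\<lambda>z. f z * g z)"
  unfolding entire_cm_iff
proof (intro allI)
  fix z assume "\<forall>z. \<exists>D. (f has_derivative D) (at z) \<and> complex_homogeneous D"
    and "\<forall>z. \<exists>D. (g has_derivative D) (at z) \<and> complex_homogeneous D"
  then obtain Df Dg where "(f has_derivative Df) (at z)" "complex_homogeneous Df"
    and "(g has_derivative Dg) (at z)" "complex_homogeneous Dg"
    by blast
  then show "\<exists>D. ((\<lambda>z. f z * g z) has_derivative D) (at z) \<and> complex_homogeneous D"
    by (intro exI[of _ "\<lambda>h. f z * Dg h + Df h * g z"] conjI has_derivative_mult)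
      (auto simp: complex_homogeneous_def algebra_simps)
qed

lemma entire_cm_diff: "entire_cm f \<Longrightarrow> entire_cm g \<Longrightarrow> entire_cm (\<lambda>z. f z - g z)"
  using entire_cm_add[OF _ entire_cm_mult[OF entire_cm_const, of g "-1"], of f] by simp

lemma entire_cm_sum:
  "(\<And>l. l \<in> L \<Longrightarrow> entire_cm (f l)) \<Longrightarrow> entire_cm (\<lambda>z. \<Sum>l\<in>L. f l z)"
  by (induction L rule: infinite_finite_induct) (simp_all add: entire_cm_const entire_cm_add)

lemma entire_cm_series:
  fixes f :: "nat \<Rightarrow> complex \<times> (complex ^ 'm::finite) \<Rightarrow> complex"
  assumes f': "\<And>n z. (f n has_derivative f' n z) (at z)"
    and homogeneous: "\<And>n z. complex_homogeneous (f' n z)"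
    and summable: "\<And>z. summable (\<lambda>n. f n z)"
    and Mtest: "\<And>z0. \<exists>M. summable M \<and> (\<forall>n. \<forall>z\<in>ball z0 1. \<forall>h. norm (f' n z h) \<le> M n * norm h)"
  shows "entire_cm (\<lambda>z. \<Sum>n. f n z)"
  unfolding entire_cm_iff
proof (intro allI exI conjI)
  fix z0
  obtain M where "summable M" and M: "\<And>n z h. z \<in> ball z0 1 \<Longrightarrow> norm (f' n z h) \<le> M n * norm h"
    using Mtest[of z0] by blast
  show "((\<lambda>z. \<Sum>n. f n z) has_derivative (\<lambda>h. \<Sum>n. f' n z0 h)) (at z0)"
    by (rule has_derivative_series_Mtest[OF open_ball convex_ball _ f' M \<open>summable M\<close> summable]) auto
  show "complex_homogeneous (\<lambda>h. \<Sum>n. f' n z0 h)"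
    unfolding complex_homogeneous_def
  proof (intro allI)
    fix c u v
    have "summable (\<lambda>n. f' n z0 (u, v))"
      by (rule summable_norm_cancel, rule summable_comparison_test'[where N = 0,
            OF summable_mult2[OF \<open>summable M\<close>, of "norm (u, v)"]])
        (use M[of z0] in simp)
    then show "(\<Sum>n. f' n z0 (c * u, c *s v)) = c * (\<Sum>n. f' n z0 (u, v))"
      using homogeneous by (simp add: complex_homogeneous_def suminf_mult)
  qed
qed

lemma norm_power_term_deriv_le:
  fixes a a' u v :: complex
  assumes "norm u \<le> R" "R \<ge> 1" "norm a \<le> R ^ n" "norm a' \<le> n * R ^ n * H" "norm v \<le> H"
  shows "norm (a * inverse (fact n) * (of_nat n * v * u ^ (n - 1)) + a' * inverse (fact n) * u ^ n)
    \<le> 2 * (inverse (fact n) * (2 * (R * R)) ^ n) * H"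
proof -
  have "R \<ge> 0" "H \<ge> 0"
    using assms(2) order_trans[OF norm_ge_zero assms(5)] by auto
  have "norm u ^ (n - 1) \<le> R ^ n"
    using power_mono[OF assms(1), of "n - 1"] power_increasing[of "n - 1" n R] assms(2) by simp
  then have "norm (a * inverse (fact n) * (of_nat n * v * u ^ (n - 1))) \<le> R ^ n * inverse (fact n) * (n * H * R ^ n)"
    unfolding norm_mult norm_inverse norm_fact norm_of_nat norm_power
    using assms(3,5) \<open>R \<ge> 0\<close> \<open>H \<ge> 0\<close> by (intro mult_mono order_refl) auto
  moreover have "norm (a' * inverse (fact n) * u ^ n) \<le> (n * R ^ n * H) * inverse (fact n) * R ^ n"
    unfolding norm_mult norm_inverse norm_fact norm_power
    using assms(1,4) \<open>R \<ge> 0\<close> \<open>H \<ge> 0\<close> by (intro mult_mono power_mono order_refl) auto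
  ultimately have "norm (a * inverse (fact n) * (of_nat n * v * u ^ (n - 1)) + a' * inverse (fact n) * u ^ n)
      \<le> n * (2 * (R ^ n * R ^ n) * inverse (fact n) * H)"
    by (intro norm_triangle_le) (simp add: algebra_simps)
  also have "\<dots> \<le> 2 ^ n * (2 * (R ^ n * R ^ n) * inverse (fact n) * H)"
    using of_nat_mono[OF less_imp_le[OF less_exp[of n]]] \<open>H \<ge> 0\<close> by (intro mult_right_mono) simp_all
  also have "\<dots> = 2 * (inverse (fact n) * (2 * (R * R)) ^ n) * H"
    by (simp add: power_mult_distrib)
  finally show ?thesis .
qed

lemma norm_fst_snd_le: "norm (fst z) \<le> norm z" "norm (snd z) \<le> norm z"
  using norm_fst_le[of "fst z" "snd z"] norm_snd_le[of "snd z" "fst z"] by simp_all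

lemma entire_cm_egf:
  fixes g :: "complex ^ 'm::finite \<Rightarrow> nat \<Rightarrow> complex"
  assumes g': "\<And>\<alpha> n. ((\<lambda>\<alpha>. g \<alpha> n) has_derivative g' \<alpha> n) (at \<alpha>)"
    and homogeneous: "\<And>\<alpha> n c h. g' \<alpha> n (c *s h) = c * g' \<alpha> n h"
    and bound: "\<And>\<alpha> n. norm (g \<alpha> n) \<le> (norm \<alpha> + 1) ^ n"
    and bound': "\<And>\<alpha> n h. norm (g' \<alpha> n h) \<le> n * (norm \<alpha> + 1) ^ n * norm h"
  shows "entire_cm (\<lambda>z. egf (g (snd z)) (fst z))"
proof -
  define f' where "f' n z h = g (snd z) n * inverse (fact n) * (of_nat n * fst h * fst z ^ (n - 1))
      + g' (snd z) n (snd h) * inverse (fact n) * fst z ^ n"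
    for n and z h :: "complex \<times> (complex ^ 'm)"
  have "entire_cm (\<lambda>z. \<Sum>n. g (snd z) n * inverse (fact n) * fst z ^ n)"
  proof (rule entire_cm_series)
    show "((\<lambda>z. g (snd z) n * inverse (fact n) * fst z ^ n) has_derivative f' n z) (at z)" for n z
      unfolding f'_def
      by (intro has_derivative_mult has_derivative_power has_derivative_fst[OF has_derivative_ident]
          has_derivative_mult_left[OF has_derivative_compose[OF has_derivative_snd[OF has_derivative_ident] g']])
    show "complex_homogeneous (f' n z)" for n z
      by (simp add: complex_homogeneous_def f'_def homogeneous algebra_simps)
    show "summable (\<lambda>n. g (snd z) n * inverse (fact n) * fst z ^ n)" for z
      using summable_egf[OF geom_bounded_powerI[OF bound[of "snd z"]], of "fst z"] by (simp add: divide_inverse)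
    show "\<exists>M. summable M \<and> (\<forall>n. \<forall>z\<in>ball z0 1. \<forall>h. norm (f' n z h) \<le> M n * norm h)" for z0
    proof (intro exI conjI allI ballI)
      define R where "R = norm z0 + 2"
      show "summable (\<lambda>n. 2 * (inverse (fact n) * (2 * (R * R)) ^ n))"
        using summable_exp by (rule summable_mult)
      fix n z and h :: "complex \<times> (complex ^ 'm)" assume "z \<in> ball z0 1"
      then have "norm z \<le> norm z0 + 1"
        using norm_triangle_ineq2[of z z0] by (simp add: dist_norm norm_minus_commute)
      then have x: "norm (fst z) \<le> R" and \<alpha>: "norm (snd z) + 1 \<le> R"
        using norm_fst_snd_le[of z] by (auto simp: R_def)
      show "norm (f' n z h) \<le> 2 * (inverse (fact n) * (2 * (R * R)) ^ n) * norm h"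
        unfolding f'_def
      proof (rule norm_power_term_deriv_le[OF x _ _ _ norm_fst_snd_le(1)])
        show "R \<ge> 1" by (simp add: R_def)
        show "norm (g (snd z) n) \<le> R ^ n"
          using order_trans[OF bound power_mono[OF \<alpha>]] by simp
        show "norm (g' (snd z) n (snd h)) \<le> n * R ^ n * norm h"
          using order_trans[OF bound' mult_mono[OF mult_left_mono[OF power_mono[OF \<alpha>]] norm_fst_snd_le(2)]]
          by (simp add: R_def)
      qed
    qed
  qed
  then show ?thesis
    by (simp add: egf_def divide_inverse)
qed

section \<open>Positions in a finite linear order\<close>

lemma pos_less_card: "pos (k::'m::{finite,linorder}) < CARD('m)"
  unfolding pos_def by (rule psubset_card_mono) auto

lemma strict_mono_pos: "strict_mono (pos :: 'm::{finite,linorder} \<Rightarrow> nat)"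
  unfolding strict_mono_def pos_def by (auto intro!: psubset_card_mono)

lemma bij_betw_pos: "bij_betw (pos :: 'm::{finite,linorder} \<Rightarrow> nat) UNIV {..<CARD('m)}"
proof -
  have inj: "inj (pos :: 'm \<Rightarrow> nat)"
    using strict_mono_pos by (rule strict_mono_imp_inj_on)
  then have "range (pos :: 'm \<Rightarrow> nat) = {..<CARD('m)}"
    by (intro card_subset_eq) (auto simp: pos_less_card card_image)
  with inj show ?thesis by (simp add: bij_betw_def)
qed

definition pos_inv :: "nat \<Rightarrow> 'm::{finite,linorder}" where
  "pos_inv = inv pos"

lemma pos_inv_pos [simp]: "pos_inv (pos k) = k"
  unfolding pos_inv_def by (rule inv_f_f[OF strict_mono_imp_inj_on[OF strict_mono_pos]])

lemma pos_pos_inv: "n < CARD('m::{finite,linorder}) \<Longrightarrow> pos (pos_inv n :: 'm) = n"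
  unfolding pos_inv_def using bij_betw_pos by (metis bij_betw_imp_surj_on f_inv_into_f lessThan_iff)

lemma pos_eq_iff [simp]: "pos k = pos k' \<longleftrightarrow> k = k'"
  by (metis pos_inv_pos)

lemma sum_reindex_pos: "(\<Sum>k\<in>UNIV. f (pos (k::'m::{finite,linorder}))) = (\<Sum>n<CARD('m). f n)"
  using sum.reindex_bij_betw[OF bij_betw_pos] by (metis (no_types))

lemma sorted_list_of_UNIV:
  "sorted_list_of_set (UNIV :: 'm::{finite,linorder} set) = map pos_inv [0..<CARD('m)]"
proof (rule sorted_list_of_set_unique[OF finite, THEN iffD1], intro conjI)
  show "sorted_wrt (<) (map pos_inv [0..<CARD('m)] :: 'm list)"
    unfolding sorted_wrt_iff_nth_less
    by (auto simp: strict_mono_less[OF strict_mono_pos, symmetric] pos_pos_inv)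
  show "set (map pos_inv [0..<CARD('m)]) = (UNIV :: 'm set)"
    by (auto simp: image_iff) (metis atLeastLessThan_iff le0 pos_inv_pos pos_less_card)
qed auto

section \<open>The graceful basis\<close>

definition nodes :: "complex ^ 'm::{finite,linorder} \<Rightarrow> nat \<Rightarrow> complex" where
  "nodes \<alpha> i = \<alpha> $ pos_inv i"

lemma nodes_pos [simp]: "nodes \<alpha> (pos j) = \<alpha> $ j"
  by (simp add: nodes_def)

lemma norm_nodes_le: "norm (nodes \<alpha> i) \<le> norm \<alpha>"
  unfolding nodes_def by (rule Finite_Cartesian_Product.norm_nth_le)

lemma ode_op_eq_fold_nodes:
  "ode_op \<alpha> g = fold (\<lambda>i. dop (nodes \<alpha> i)) [0..<CARD('m)] g"
  for \<alpha> :: "complex ^ 'm::{finite,linorder}"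
  by (simp add: ode_op_def sorted_list_of_UNIV fold_map o_def nodes_def)

(* The Newton form makes the polynomial dependence on \<alpha> visible; graceful_basis_eq_egf
   recovers the series \<Sum>\<^sub>n [t^k] P\<^sub>n x^n/n! of the header. *)
definition graceful_basis :: "'m::{finite,linorder} \<Rightarrow> complex \<times> (complex ^ 'm::{finite,linorder}) \<Rightarrow> complex" where
  "graceful_basis k z = (\<Sum>l<CARD('m). coeff (newton (nodes (snd z)) l) (pos k)
      * egf (\<lambda>n. newton_coord (nodes (snd z)) n l) (fst z))"

abbreviation power_rem_nodes :: "complex ^ 'm::{finite,linorder} \<Rightarrow> nat \<Rightarrow> complex poly" where
  "power_rem_nodes \<alpha> n \<equiv> power_rem (nodes \<alpha>) CARD('m) n"

lemma geom_bounded_coeff_power_rem: "geom_bounded (\<lambda>n. coeff (power_rem (nodes \<alpha>) N n) i)"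
  unfolding coeff_power_rem
  by (intro geom_bounded_sum geom_bounded_newton_coord[OF norm_nodes_le])

lemma graceful_basis_eq_egf:
  "graceful_basis k (x, \<alpha>) = egf (\<lambda>n. coeff (power_rem_nodes \<alpha> n) (pos k)) x"
  unfolding graceful_basis_def coeff_power_rem
  by (simp add: egf_sum geom_bounded_newton_coord[OF norm_nodes_le])

lemma graceful_basis_holomorphic: "(\<lambda>x. graceful_basis k (x, \<alpha>)) holomorphic_on S"
  unfolding graceful_basis_eq_egf by (rule egf_holomorphic[OF geom_bounded_coeff_power_rem])

lemma graceful_basis_solves_ode: "ode_op \<alpha> (\<lambda>x. graceful_basis k (x, \<alpha>)) = (\<lambda>x. 0)"
  for \<alpha> :: "complex ^ 'm::{finite,linorder}"
proof -
  have "ode_op \<alpha> (\<lambda>x. graceful_basis k (x, \<alpha>))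
      = egf (fold (\<lambda>i. shift_diff (nodes \<alpha> i)) [0..<CARD('m)] (\<lambda>n. coeff (power_rem_nodes \<alpha> n) (pos k)))"
    unfolding ode_op_eq_fold_nodes graceful_basis_eq_egf
    by (simp add: fold_dop_egf geom_bounded_coeff_power_rem)
  also have "\<dots> = egf (\<lambda>n. 0)"
    unfolding power_rem_eq_mod fold_shift_diff_coeff_mod by simp
  finally show ?thesis by (simp add: fun_eq_iff egf_def)
qed

lemma graceful_basis_linear_independent:
  fixes \<alpha> :: "complex ^ 'm::{finite,linorder}"
  assumes "\<forall>x. (\<Sum>k\<in>UNIV. c k * graceful_basis k (x, \<alpha>)) = 0"
  shows "c k = 0"
proof -
  have coeffs_0: "(\<Sum>k'\<in>UNIV. c k' * coeff (power_rem_nodes \<alpha> n) (pos k')) = 0" for n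
  proof (rule egf_eq_0_imp_coeffs_eq_0)
    show "geom_bounded (\<lambda>n. \<Sum>k'\<in>UNIV. c k' * coeff (power_rem_nodes \<alpha> n) (pos k'))"
      by (intro geom_bounded_sum geom_bounded_coeff_power_rem)
    show "egf (\<lambda>n. \<Sum>k'\<in>UNIV. c k' * coeff (power_rem_nodes \<alpha> n) (pos k')) x = 0" for x
      using assms by (simp add: egf_sum geom_bounded_coeff_power_rem graceful_basis_eq_egf)
  qed
  have "power_rem_nodes \<alpha> (pos k) = monom 1 (pos k)"
    unfolding power_rem_eq_mod using pos_less_card[of k]
    by (intro mod_poly_less) (simp add: degree_monom_eq degree_newton)
  then have "(\<Sum>k'\<in>UNIV. c k' * coeff (power_rem_nodes \<alpha> (pos k)) (pos k')) = (\<Sum>k'\<in>UNIV. if k' = k then c k else 0)"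
    by (intro sum.cong) (auto simp: coeff_monom)
  with coeffs_0 show ?thesis by simp
qed

lemma entire_cm_coeff_newton:
  "entire_cm (\<lambda>z :: complex \<times> (complex ^ 'm::{finite,linorder}). coeff (newton (nodes (snd z)) l) i)"
proof (induction l arbitrary: i)
  case 0
  show ?case by (simp add: entire_cm_const)
next
  case (Suc l)
  have "entire_cm (\<lambda>z :: complex \<times> (complex ^ 'm::{finite,linorder}). if i = 0 then 0 else coeff (newton (nodes (snd z)) l) (i - 1))"
    using Suc[of "i - 1"] by (cases "i = 0") (simp_all add: entire_cm_const)
  moreover have "entire_cm (\<lambda>z :: complex \<times> (complex ^ 'm::{finite,linorder}). nodes (snd z) l * coeff (newton (nodes (snd z)) l) i)"
    unfolding nodes_def by (intro entire_cm_mult entire_cm_component Suc[unfolded nodes_def])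
  ultimately show ?case
    unfolding coeff_newton_Suc by (rule entire_cm_diff)
qed

lemma entire_cm_egf_newton_coord:
  "entire_cm (\<lambda>z :: complex \<times> (complex ^ 'm::{finite,linorder}). egf (\<lambda>n. newton_coord (nodes (snd z)) n l) (fst z))"
proof (rule entire_cm_egf)
  show "((\<lambda>\<alpha>. newton_coord (nodes \<alpha>) n l) has_derivative (\<lambda>h. newton_coord_deriv (nodes \<alpha>) (nodes h) n l)) (at \<alpha>)"
    for \<alpha> :: "complex ^ 'm::{finite,linorder}" and n
    unfolding nodes_def
    by (intro has_derivative_newton_coord bounded_linear_imp_has_derivative bounded_linear_vec_nth)
  show "newton_coord_deriv (nodes \<alpha>) (nodes (c *s h)) n l = c * newton_coord_deriv (nodes \<alpha>) (nodes h) n l"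
    for \<alpha> h :: "complex ^ 'm::{finite,linorder}" and c n
  proof -
    have "nodes (c *s h) = (\<lambda>i. c * nodes h i)"
      by (simp add: nodes_def fun_eq_iff)
    then show ?thesis by (simp add: newton_coord_deriv_cmult)
  qed
  show "norm (newton_coord (nodes \<alpha>) n l) \<le> (norm \<alpha> + 1) ^ n" for \<alpha> :: "complex ^ 'm::{finite,linorder}" and n
    by (rule norm_newton_coord_le[OF norm_nodes_le])
  show "norm (newton_coord_deriv (nodes \<alpha>) (nodes h) n l) \<le> n * (norm \<alpha> + 1) ^ n * norm h"
    for \<alpha> h :: "complex ^ 'm::{finite,linorder}" and n
    by (rule norm_newton_coord_deriv_le[OF norm_nodes_le norm_nodes_le])
qed

lemma entire_cm_graceful_basis: "entire_cm (graceful_basis k)"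
  unfolding graceful_basis_def[abs_def]
  by (intro entire_cm_sum entire_cm_mult entire_cm_coeff_newton entire_cm_egf_newton_coord)

lemma vandermonde_mult_coeffs:
  fixes \<alpha> :: "complex ^ 'm::{finite,linorder}"
  assumes "degree q < CARD('m)"
  shows "(vandermonde \<alpha> *v (\<chi> k. coeff q (pos k))) $ j = poly q (\<alpha> $ j)"
proof -
  have "(vandermonde \<alpha> *v (\<chi> k. coeff q (pos k))) $ j = (\<Sum>i<CARD('m). coeff q i * (\<alpha> $ j) ^ i)"
    unfolding matrix_vector_mult_def vandermonde_def
    using sum_reindex_pos[of "\<lambda>i. coeff q i * (\<alpha> $ j) ^ i"] by (simp add: mult.commute)
  also have "\<dots> = poly q (\<alpha> $ j)"
    unfolding poly_altdef using assms by (intro sum.mono_neutral_right) (auto simp: coeff_eq_0)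
  finally show ?thesis .
qed

lemma vandermonde_mult_graceful_basis:
  fixes \<alpha> :: "complex ^ 'm::{finite,linorder}"
  shows "vandermonde \<alpha> *v (\<chi> k. graceful_basis k (x, \<alpha>)) = (\<chi> j. exp (\<alpha> $ j * x))"
proof -
  have "(vandermonde \<alpha> *v (\<chi> k. graceful_basis k (x, \<alpha>))) $ j = exp (\<alpha> $ j * x)" for j
  proof -
    have "(vandermonde \<alpha> *v (\<chi> k. graceful_basis k (x, \<alpha>))) $ j
        = egf (\<lambda>n. (vandermonde \<alpha> *v (\<chi> k. coeff (power_rem_nodes \<alpha> n) (pos k))) $ j) x"
      by (simp add: matrix_vector_mult_def graceful_basis_eq_egf egf_sum geom_bounded_coeff_power_rem)
    also have "\<dots> = egf (\<lambda>n. (\<alpha> $ j) ^ n) x"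
      using poly_power_rem[of "pos j" "CARD('m)" "nodes \<alpha>"] pos_less_card[of j]
      by (simp add: vandermonde_mult_coeffs degree_power_rem_less)
    finally show ?thesis
      by (simp add: egf_power)
  qed
  then show ?thesis by (simp add: vec_eq_iff)
qed

lemma vandermonde_injective:
  fixes \<alpha> v :: "complex ^ 'm::{finite,linorder}"
  assumes distinct: "\<And>i j. i \<noteq> j \<Longrightarrow> \<alpha> $ i \<noteq> \<alpha> $ j" and "vandermonde \<alpha> *v v = 0"
  shows "v = 0"
proof -
  define q where "q = (\<Sum>i<CARD('m). monom (v $ pos_inv i) i)"
  have coeff_q: "coeff q (pos k) = v $ k" for k
    by (simp add: q_def coeff_sum coeff_monom pos_less_card cong: if_cong)
  have deg: "degree q < CARD('m)"
    unfolding q_def by (rule le_less_trans[OF degree_sum_le[where n = "CARD('m) - 1"]])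
      (auto intro: order_trans[OF degree_monom_le])
  have roots: "poly q (\<alpha> $ j) = 0" for j
    using vandermonde_mult_coeffs[OF \<open>degree q < CARD('m)\<close>, of \<alpha> j] assms(2) by (simp add: coeff_q)
  have "q = 0"
  proof (rule ccontr)
    assume "q \<noteq> 0"
    have "CARD('m) = card (range (\<lambda>j. \<alpha> $ j))"
      using distinct by (intro card_image[symmetric]) (auto simp: inj_on_def)
    also have "\<dots> \<le> card {x. poly q x = 0}"
      using roots by (intro card_mono poly_roots_finite[OF \<open>q \<noteq> 0\<close>]) auto
    also have "\<dots> \<le> degree q"
      by (rule card_poly_roots_bound[OF \<open>q \<noteq> 0\<close>])
    finally show False using deg by simp
  qed
  then show ?thesis
    using coeff_q by (simp add: vec_eq_iff)
qed

lemma matrix_inv_left: "invertible A \<Longrightarrow> matrix_inv A ** A = mat 1"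
  unfolding matrix_inv_def invertible_def by (rule someI2_ex) auto

lemma invertible_vandermonde:
  fixes \<alpha> :: "complex ^ 'm::{finite,linorder}"
  assumes "\<And>i j. i \<noteq> j \<Longrightarrow> \<alpha> $ i \<noteq> \<alpha> $ j"
  shows "invertible (vandermonde \<alpha>)"
  unfolding invertible_left_inverse matrix_left_invertible_ker
  using vandermonde_injective[OF assms] by blast

lemma graceful_basis_eq_inverse_vandermonde:
  fixes \<alpha> :: "complex ^ 'm::{finite,linorder}"
  assumes "\<And>i j. i \<noteq> j \<Longrightarrow> \<alpha> $ i \<noteq> \<alpha> $ j"
  shows "graceful_basis k (x, \<alpha>) = (matrix_inv (vandermonde \<alpha>) *v (\<chi> j. exp (\<alpha> $ j * x))) $ k"
  using matrix_inv_left[OF invertible_vandermonde[OF assms]]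
  by (simp flip: vandermonde_mult_graceful_basis add: matrix_vector_mul_assoc)

theorem corollary1:
  shows "\<exists>F :: 'm::{finite,linorder} \<Rightarrow> (complex \<times> (complex ^ 'm::{finite,linorder})) \<Rightarrow> complex.
    (\<forall>k. entire_cm (F k)) \<and>
    (\<forall>\<alpha> x. (\<forall>i j. i \<noteq> j \<longrightarrow> \<alpha> $ i \<noteq> \<alpha> $ j) \<longrightarrow>
        (\<forall>k. F k (x, \<alpha>) = (matrix_inv (vandermonde \<alpha>) *v (\<chi> j. exp (\<alpha> $ j * x))) $ k)) \<and>
    (\<forall>\<alpha>. (\<forall>k. (\<lambda>x. F k (x, \<alpha>)) holomorphic_on UNIV) \<and>
         (\<forall>k. ode_op \<alpha> (\<lambda>x. F k (x, \<alpha>)) = (\<lambda>x. 0)) \<and>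
         (\<forall>c :: 'm::{finite,linorder} \<Rightarrow> complex. (\<forall>x. (\<Sum>k\<in>UNIV. c k * F k (x, \<alpha>)) = 0) \<longrightarrow> (\<forall>k. c k = 0)))"
  by (intro exI[of _ graceful_basis] conjI allI impI)
    (auto intro: entire_cm_graceful_basis graceful_basis_eq_inverse_vandermonde graceful_basis_holomorphic
      graceful_basis_solves_ode graceful_basis_linear_independent)

end
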